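(* Let $(x_n)_{n\ge1}$ be a sequence of integers. Then the set $$A=\Big\{\alpha\in\mathbb{R} : \delta_{\min}^{\alpha}(N)<\frac{1}{N^{2-o(1)}}\Big\}$$ either has Lebesgue measure zero or has full Lebesgue measure (its complement has measure zero).
   Context: For $x\in\mathbb{R}$, $\|x\|=\min_{k\in\mathbb{Z}}|x-k|$. For $\alpha\in\mathbb{R}$, $\delta_{\min}^{\alpha}(N)=\min\{\|\alpha x_m-\alpha x_n\| : 1\le m,n\le N,\ m\ne n\}$. The condition $\delta_{\min}^{\alpha}(N)<\frac{1}{N^{2-o(1)}}$ means there is a function $f_\alpha(N)\to0$ as $N\to\infty$ such that $\delta_{\min}^{\alpha}(N)<N^{-(2-f_\alpha(N))}$ for all sufficiently large $N$. *)

theory Defs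
  imports "HOL-Analysis.Analysis"
begin

definition dist_to_int :: "real \<Rightarrow> real" where
  "dist_to_int x = (INF k::int. \<bar>x - real_of_int k\<bar>)"

definition delta_min :: "(nat \<Rightarrow> int) \<Rightarrow> real \<Rightarrow> nat \<Rightarrow> real" where
  "delta_min x \<alpha> N =
     Min {dist_to_int (\<alpha> * real_of_int (x m) - \<alpha> * real_of_int (x n)) | m n.
            1 \<le> m \<and> m \<le> N \<and> 1 \<le> n \<and> n \<le> N \<and> m \<noteq> n}"

definition small_gap :: "(nat \<Rightarrow> int) \<Rightarrow> real \<Rightarrow> bool" where
  "small_gap x \<alpha> \<longleftrightarrow>
     (\<exists>f :: nat \<Rightarrow> real. f \<longlonglongrightarrow> 0 \<and>
        (\<forall>\<^sub>F N in sequentially. delta_min x \<alpha> N < real N powr (- (2 - f N))))"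

end

theory Submission
  imports Defs
begin

(*
  The set A is Borel, invariant under integer translations of alpha (which move every
  alpha x_m - alpha x_n by an integer), and mapped into itself by every dilation
  alpha -> q alpha with q a positive integer: the gaps at q alpha are at most q times those
  at alpha, and the constant factor q is absorbed by the o(1) in the exponent.
  Hence the complement C is 1-periodic and q alpha in C implies alpha in C. If C meets
  [0,1] in a set of measure c > 0, rescaling a dyadic interval I of length 1/2^n by
  q = 2^(n+1) covers a whole period, so C fills at least the proportion c/2 of I. Thus A has
  density at most 1 - c/2 in every dyadic interval, and covering A inside [0,1] by dyadic
  intervals of almost the same total measure forces A to be null.
*)

lemma dist_to_int_le: "dist_to_int y \<le> \<bar>y - of_int k\<bar>"
  unfolding dist_to_int_def by (rule cINF_lower) (auto intro: bdd_belowI[of _ 0])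

lemma dist_to_int_eq_min_frac: "dist_to_int y = min (frac y) (1 - frac y)"
proof (rule antisym)
  have "dist_to_int y \<le> \<bar>y - of_int \<lfloor>y\<rfloor>\<bar>"
    and "dist_to_int y \<le> \<bar>y - of_int (\<lfloor>y\<rfloor> + 1)\<bar>"
    by (rule dist_to_int_le)+
  then show "dist_to_int y \<le> min (frac y) (1 - frac y)"
    by (simp add: frac_def)
  show "min (frac y) (1 - frac y) \<le> dist_to_int y"
    unfolding dist_to_int_def
  proof (rule cINF_greatest)
    fix k :: int
    show "min (frac y) (1 - frac y) \<le> \<bar>y - of_int k\<bar>"
      by (cases "k \<le> \<lfloor>y\<rfloor>") (simp_all add: frac_def; linarith)+
  qed simp
qed

lemma dist_to_int_attained: "\<exists>k. dist_to_int y = \<bar>y - of_int k\<bar>"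
proof (cases "frac y \<le> 1 - frac y")
  case True
  then show ?thesis
    by (intro exI[of _ "\<lfloor>y\<rfloor>"]) (simp add: dist_to_int_eq_min_frac frac_def)
next
  case False
  then show ?thesis
    by (intro exI[of _ "\<lfloor>y\<rfloor> + 1"]) (simp add: dist_to_int_eq_min_frac frac_def)
qed

lemma dist_to_int_add_of_int [simp]: "dist_to_int (y + of_int j) = dist_to_int y"
  by (simp add: dist_to_int_eq_min_frac frac_def)

lemma dist_to_int_mult_of_nat_le: "dist_to_int (of_nat q * y) \<le> of_nat q * dist_to_int y"
proof -
  obtain k where k: "dist_to_int y = \<bar>y - of_int k\<bar>"
    using dist_to_int_attained by blast
  have "dist_to_int (of_nat q * y) \<le> \<bar>of_nat q * y - of_int (int q * k)\<bar>"
    by (rule dist_to_int_le)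
  also have "\<dots> = of_nat q * \<bar>y - of_int k\<bar>"
    by (simp add: abs_mult flip: right_diff_distrib)
  finally show ?thesis
    by (simp only: k)
qed

lemma borel_measurable_dist_to_int [measurable]: "dist_to_int \<in> borel_measurable borel"
  unfolding dist_to_int_eq_min_frac[abs_def] frac_def by measurable

definition index_pairs :: "nat \<Rightarrow> (nat \<times> nat) set" where
  "index_pairs N = {(m, n). 1 \<le> m \<and> m \<le> N \<and> 1 \<le> n \<and> n \<le> N \<and> m \<noteq> n}"

lemma finite_index_pairs [simp]: "finite (index_pairs N)"
  by (rule finite_subset[of _ "{1..N} \<times> {1..N}"]) (auto simp: index_pairs_def)

lemma index_pairs_nonempty: "2 \<le> N \<Longrightarrow> index_pairs N \<noteq> {}"
  unfolding index_pairs_def by (intro ex_in_conv[THEN iffD1] exI[of _ "(1, 2)"]) auto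

lemma delta_min_eq_Min_image:
  "delta_min x \<alpha> N =
     Min ((\<lambda>(m, n). dist_to_int (\<alpha> * of_int (x m) - \<alpha> * of_int (x n))) ` index_pairs N)"
  unfolding delta_min_def index_pairs_def by (rule arg_cong[where f = Min]) auto

lemma borel_measurable_delta_min [measurable]:
  "(\<lambda>\<alpha>. delta_min x \<alpha> N) \<in> borel_measurable borel"
  unfolding delta_min_eq_Min_image by (rule borel_measurable_Min) (auto split: prod.splits)

lemma delta_min_add_of_int: "delta_min x (\<alpha> + of_int k) N = delta_min x \<alpha> N"
proof -
  have "(\<alpha> + of_int k) * of_int (x m) - (\<alpha> + of_int k) * of_int (x n)
      = (\<alpha> * of_int (x m) - \<alpha> * of_int (x n)) + of_int (k * (x m - x n))" for m n
    by (simp add: algebra_simps)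
  then have "dist_to_int ((\<alpha> + of_int k) * of_int (x m) - (\<alpha> + of_int k) * of_int (x n))
      = dist_to_int (\<alpha> * of_int (x m) - \<alpha> * of_int (x n))" for m n
    by (metis dist_to_int_add_of_int)
  then show ?thesis
    unfolding delta_min_def by (simp only:)
qed

lemma delta_min_mult_of_nat_le:
  assumes "2 \<le> N"
  shows "delta_min x (of_nat q * \<alpha>) N \<le> of_nat q * delta_min x \<alpha> N"
proof -
  have "delta_min x \<alpha> N
      \<in> (\<lambda>(m, n). dist_to_int (\<alpha> * of_int (x m) - \<alpha> * of_int (x n))) ` index_pairs N"
    unfolding delta_min_eq_Min_image using index_pairs_nonempty[OF assms] by (intro Min_in) auto
  then obtain m n where mn: "(m, n) \<in> index_pairs N"
    and min: "delta_min x \<alpha> N = dist_to_int (\<alpha> * of_int (x m) - \<alpha> * of_int (x n))"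
    by auto
  have "delta_min x (of_nat q * \<alpha>) N
      \<le> dist_to_int (of_nat q * \<alpha> * of_int (x m) - of_nat q * \<alpha> * of_int (x n))"
    unfolding delta_min_eq_Min_image using mn by (intro Min_le) force+
  also have "\<dots> = dist_to_int (of_nat q * (\<alpha> * of_int (x m) - \<alpha> * of_int (x n)))"
    by (rule arg_cong[where f = dist_to_int]) (simp add: algebra_simps)
  also have "\<dots> \<le> of_nat q * delta_min x \<alpha> N"
    unfolding min by (rule dist_to_int_mult_of_nat_le)
  finally show ?thesis .
qed

(* For N \<ge> 2: the least t \<ge> 0 with y \<le> N powr -(a - t). *)
definition excess_exponent :: "real \<Rightarrow> nat \<Rightarrow> real \<Rightarrow> real" where
  "excess_exponent a N y = (if 0 < y then max 0 (a + log (real N) y) else 0)"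

lemma excess_exponent_nonneg: "0 \<le> excess_exponent a N y"
  by (simp add: excess_exponent_def)

lemma less_powr_iff_excess_exponent_less:
  assumes "2 \<le> N" and "0 < t"
  shows "y < real N powr (- (a - t)) \<longleftrightarrow> excess_exponent a N y < t"
proof (cases "0 < y")
  case True
  with assms have "y < real N powr (- (a - t)) \<longleftrightarrow> log (real N) y < t - a"
    by (simp add: less_powr_iff)
  with True assms show ?thesis
    by (auto simp: excess_exponent_def)
next
  case False
  have "0 < real N powr (- (a - t))"
    using assms by simp
  with False have "y < real N powr (- (a - t))"
    by linarith
  with False \<open>0 < t\<close> show ?thesis
    by (simp add: excess_exponent_def)
qed

lemma eventually_less_powr_of_vanishing_exponent:
  fixes f g :: "nat \<Rightarrow> real"
  assumes "f \<longlonglongrightarrow> 0" and "\<forall>\<^sub>F N in sequentially. g N < real N powr (- (a - f N))"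
    and "0 < \<epsilon>"
  shows "\<forall>\<^sub>F N in sequentially. g N < real N powr (- (a - \<epsilon>))"
  using order_tendstoD(2)[OF assms(1,3)] eventually_ge_at_top[of 1] assms(2)
proof eventually_elim
  case (elim N)
  then have "real N powr (- (a - f N)) \<le> real N powr (- (a - \<epsilon>))"
    by (intro powr_mono) auto
  with elim show ?case
    by linarith
qed

lemma vanishing_exponent_exists:
  fixes g :: "nat \<Rightarrow> real"
  assumes bound: "\<And>k::nat. \<forall>\<^sub>F N in sequentially. g N < real N powr (- (a - 1 / (real k + 1)))"
  shows "\<exists>f. f \<longlonglongrightarrow> 0 \<and> (\<forall>\<^sub>F N in sequentially. g N < real N powr (- (a - f N)))"
proof -
  define e where "e N = excess_exponent a N (g N)" for N
  have "e \<longlonglongrightarrow> 0"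
  proof (rule order_tendstoI)
    show "\<forall>\<^sub>F N in sequentially. b < e N" if "b < 0" for b
      using that excess_exponent_nonneg unfolding e_def
      by (intro always_eventually allI) (rule less_le_trans)
    show "\<forall>\<^sub>F N in sequentially. e N < b" if "0 < b" for b
    proof -
      obtain k where k: "inverse (real (Suc k)) < b"
        using reals_Archimedean[OF \<open>0 < b\<close>] by blast
      show ?thesis
        using bound[of k] eventually_ge_at_top[of 2]
      proof eventually_elim
        case (elim N)
        then have "e N < 1 / (real k + 1)"
          unfolding e_def using less_powr_iff_excess_exponent_less by simp
        with k show ?case
          by (simp add: inverse_eq_divide add.commute)
      qed
    qed
  qed
  \<comment> \<open>The summand 1/N makes the bound strict.\<close>
  then have "(\<lambda>N. e N + 1 / real N) \<longlonglongrightarrow> 0"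
    using lim_1_over_n by (rule tendsto_add_zero)
  moreover have "\<forall>\<^sub>F N in sequentially. g N < real N powr (- (a - (e N + 1 / real N)))"
    using eventually_ge_at_top[of 2]
  proof eventually_elim
    case (elim N)
    then have "0 < 1 / real N"
      by simp
    with excess_exponent_nonneg[of a N "g N"] have "0 < e N + 1 / real N" "e N < e N + 1 / real N"
      unfolding e_def by linarith+
    then show ?case
      unfolding e_def using less_powr_iff_excess_exponent_less[OF elim] by blast
  qed
  ultimately show ?thesis
    by blast
qed

lemma small_gap_iff:
  "small_gap x \<alpha> \<longleftrightarrow>
     (\<forall>k::nat. \<forall>\<^sub>F N in sequentially. delta_min x \<alpha> N < real N powr (- (2 - 1 / (real k + 1))))"
proof
  assume "small_gap x \<alpha>"
  then obtain f where f: "f \<longlonglongrightarrow> 0"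
    and gap: "\<forall>\<^sub>F N in sequentially. delta_min x \<alpha> N < real N powr (- (2 - f N))"
    unfolding small_gap_def by blast
  show "\<forall>k::nat. \<forall>\<^sub>F N in sequentially. delta_min x \<alpha> N < real N powr (- (2 - 1 / (real k + 1)))"
    by (intro allI eventually_less_powr_of_vanishing_exponent[OF f gap]) simp
next
  assume "\<forall>k::nat. \<forall>\<^sub>F N in sequentially. delta_min x \<alpha> N < real N powr (- (2 - 1 / (real k + 1)))"
  then show "small_gap x \<alpha>"
    unfolding small_gap_def by (intro vanishing_exponent_exists) blast
qed

lemma sets_small_gap: "{\<alpha>. small_gap x \<alpha>} \<in> sets borel"
proof -
  have "Measurable.pred borel (\<lambda>\<alpha>. \<forall>k::nat. \<exists>N0. \<forall>N\<ge>N0.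
          delta_min x \<alpha> N < real N powr (- (2 - 1 / (real k + 1))))"
    by measurable
  then show ?thesis
    by (simp add: small_gap_iff eventually_sequentially pred_def)
qed

lemma small_gap_add_of_int: "small_gap x (\<alpha> + of_int k) \<longleftrightarrow> small_gap x \<alpha>"
  by (simp add: small_gap_def delta_min_add_of_int)

lemma small_gap_mult_of_nat:
  assumes "small_gap x \<alpha>"
  shows "small_gap x (of_nat q * \<alpha>)"
  unfolding small_gap_iff
proof
  fix k :: nat
  define \<epsilon> where "\<epsilon> = 1 / (real k + 1)"
  have "0 < \<epsilon>"
    by (simp add: \<epsilon>_def)
  obtain f where f: "f \<longlonglongrightarrow> 0"
    and gap: "\<forall>\<^sub>F N in sequentially. delta_min x \<alpha> N < real N powr (- (2 - f N))"
    using assms unfolding small_gap_def by blast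
  have half_gap: "\<forall>\<^sub>F N in sequentially. delta_min x \<alpha> N < real N powr (- (2 - \<epsilon> / 2))"
    using \<open>0 < \<epsilon>\<close> by (intro eventually_less_powr_of_vanishing_exponent[OF f gap]) simp
  obtain M :: nat where M: "real q powr (2 / \<epsilon>) < real M"
    using reals_Archimedean2 by blast
  have q_less: "real q < real N powr (\<epsilon> / 2)" if "M \<le> N" for N
  proof -
    have "real q = (real q powr (2 / \<epsilon>)) powr (\<epsilon> / 2)"
      using \<open>0 < \<epsilon>\<close> by (simp add: powr_powr)
    also have "\<dots> < real N powr (\<epsilon> / 2)"
      using M that \<open>0 < \<epsilon>\<close> by (intro powr_less_mono2) auto
    finally show ?thesis .
  qed
  show "\<forall>\<^sub>F N in sequentially. delta_min x (of_nat q * \<alpha>) N < real N powr (- (2 - 1 / (real k + 1)))"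
    using half_gap eventually_ge_at_top[of "max 2 M"]
  proof eventually_elim
    case (elim N)
    have "delta_min x (of_nat q * \<alpha>) N \<le> real q * delta_min x \<alpha> N"
      using elim by (intro delta_min_mult_of_nat_le) auto
    also have "\<dots> \<le> real q * real N powr (- (2 - \<epsilon> / 2))"
      using elim by (intro mult_left_mono) auto
    also have "\<dots> < real N powr (\<epsilon> / 2) * real N powr (- (2 - \<epsilon> / 2))"
      using q_less elim by (intro mult_strict_right_mono) auto
    also have "\<dots> = real N powr (- (2 - \<epsilon>))"
      by (simp flip: powr_add)
    finally show ?case
      unfolding \<epsilon>_def .
  qed
qed

definition integer_periodic :: "real set \<Rightarrow> bool" where
  "integer_periodic E \<longleftrightarrow> (\<forall>\<alpha> (k::int). \<alpha> + of_int k \<in> E \<longleftrightarrow> \<alpha> \<in> E)"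

lemma integer_periodic_translate_unit_interval:
  assumes "integer_periodic E"
  shows "(+) (of_int k) ` (E \<inter> {0..1}) = E \<inter> {of_int k..of_int k + 1}"
proof (intro equalityI subsetI)
  fix y
  assume "y \<in> (+) (of_int k) ` (E \<inter> {0..1})"
  then show "y \<in> E \<inter> {of_int k..of_int k + 1}"
    using assms by (auto simp: integer_periodic_def add.commute)
next
  fix y
  assume y: "y \<in> E \<inter> {of_int k..of_int k + 1}"
  then have "y - of_int k \<in> E"
    using assms unfolding integer_periodic_def by (metis diff_add_cancel IntD1)
  with y show "y \<in> (+) (of_int k) ` (E \<inter> {0..1})"
    by (intro image_eqI[of _ _ "y - of_int k"]) auto
qed

lemma null_sets_if_integer_periodic:
  assumes "integer_periodic E" and "E \<inter> {0..1} \<in> null_sets lebesgue"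
  shows "E \<in> null_sets lebesgue"
proof -
  have "E = (\<Union>k::int. (+) (of_int k) ` (E \<inter> {0..1}))"
  proof (intro equalityI subsetI)
    fix y
    assume "y \<in> E"
    then have "y \<in> E \<inter> {of_int \<lfloor>y\<rfloor>..of_int \<lfloor>y\<rfloor> + 1}"
      by (simp add: of_int_floor_le less_imp_le)
    then show "y \<in> (\<Union>k::int. (+) (of_int k) ` (E \<inter> {0..1}))"
      unfolding integer_periodic_translate_unit_interval[OF assms(1)] by blast
  qed (auto simp: integer_periodic_translate_unit_interval[OF assms(1)])
  moreover have "negligible (E \<inter> {0..1})"
    using assms(2) by (simp add: negligible_iff_null_sets)
  then have "negligible (\<Union>k::int. (+) (of_int k) ` (E \<inter> {0..1}))"
    by (intro negligible_countable_Union) (auto intro: negligible_translation)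
  ultimately show ?thesis
    by (simp add: negligible_iff_null_sets)
qed

lemma null_sets_if_fmeasurable_measure_eq_0:
  "S \<in> fmeasurable M \<Longrightarrow> measure M S = 0 \<Longrightarrow> S \<in> null_sets M"
  by (auto simp: emeasure_eq_measure2 intro!: null_setsI)

lemma lmeasurable_Int_interval:
  fixes E :: "real set"
  assumes "E \<in> sets lebesgue"
  shows "E \<inter> {a..b} \<in> lmeasurable"
  using assms by (intro bounded_set_imp_lmeasurable) auto

(* Dilation by q maps [u, u + 2/q] onto an interval of length 2, which contains a whole
   period [k, k + 1]; the points of [u, u + 2/q] sent into C lie in C themselves. *)
lemma measure_unit_interval_le_scaled:
  fixes C :: "real set" and q :: nat
  assumes C: "C \<in> sets lebesgue" "integer_periodic C"
    and dil: "\<And>\<alpha>. real q * \<alpha> \<in> C \<Longrightarrow> \<alpha> \<in> C" and "0 < q"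
  shows "measure lebesgue (C \<inter> {0..1}) \<le> real q * measure lebesgue (C \<inter> {u..u + 2 / real q})"
proof -
  define P where "P = {\<alpha> \<in> {u..u + 2 / real q}. real q * \<alpha> \<in> C}"
  define k where "k = \<lceil>real q * u\<rceil>"
  have q: "0 < real q"
    using \<open>0 < q\<close> by simp
  have image_P: "(\<lambda>\<alpha>. real q *\<^sub>R \<alpha> + 0) ` P = C \<inter> {real q * u..real q * u + 2}"
  proof (intro equalityI subsetI)
    fix y
    assume "y \<in> (\<lambda>\<alpha>. real q *\<^sub>R \<alpha> + 0) ` P"
    with q show "y \<in> C \<inter> {real q * u..real q * u + 2}"
      by (auto simp: P_def field_simps)
  next
    fix y
    assume "y \<in> C \<inter> {real q * u..real q * u + 2}"
    with q show "y \<in> (\<lambda>\<alpha>. real q *\<^sub>R \<alpha> + 0) ` P"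
      by (intro image_eqI[of _ _ "y / real q"]) (auto simp: P_def field_simps)
  qed
  have "measure lebesgue (C \<inter> {0..1}) = measure lebesgue (C \<inter> {of_int k..of_int k + 1})"
    by (simp flip: integer_periodic_translate_unit_interval[OF C(2)] add: measure_translation)
  also have "\<dots> \<le> measure lebesgue (C \<inter> {real q * u..real q * u + 2})"
    unfolding k_def using C(1)
    by (intro measure_mono_fmeasurable lmeasurable_Int_interval) (auto, linarith+)
  also have "\<dots> = real q * measure lebesgue P"
    using measure_lebesgue_affine[of "real q" 0 P]
    by (simp only: image_P DIM_real power_one_right abs_of_nat)
  also have "\<dots> \<le> real q * measure lebesgue (C \<inter> {u..u + 2 / real q})"
  proof (intro mult_left_mono)
    show "measure lebesgue P \<le> measure lebesgue (C \<inter> {u..u + 2 / real q})"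
    proof (cases "P \<in> sets lebesgue")
      case True
      then show ?thesis
        using dil C(1) by (intro measure_mono_fmeasurable lmeasurable_Int_interval) (auto simp: P_def)
    qed (simp add: measure_notin_sets)
  qed simp
  finally show ?thesis .
qed

lemma negligible_Union_interval_boundaries:
  fixes D :: "real set set"
  assumes "countable D" and "\<And>K. K \<in> D \<Longrightarrow> \<exists>c d. K = {c..d}"
  shows "negligible (\<Union>K\<in>D. K - interior K)"
proof (intro negligible_countable_Union)
  show "countable ((\<lambda>K. K - interior K) ` D)"
    using assms(1) by simp
  show "negligible L" if L: "L \<in> (\<lambda>K. K - interior K) ` D" for L
  proof -
    obtain c d where "L = {c..d} - interior {c..d}"
      using L assms(2) by blast
    then have "L \<subseteq> {c, d}"
      by auto
    then show ?thesis
      by (rule negligible_subset[rotated]) simp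
  qed
qed

lemma emeasure_interior_interval:
  "emeasure lebesgue (interior {c..d}) = emeasure lebesgue {c..d::real}"
  by (cases "c \<le> d") auto

lemma emeasure_Int_Union_intervals_le:
  fixes A :: "real set" and D :: "real set set" and \<beta> :: ennreal
  assumes A: "A \<in> sets lebesgue"
    and D: "countable D" "pairwise (\<lambda>K L. interior K \<inter> interior L = {}) D"
      "\<And>K. K \<in> D \<Longrightarrow> \<exists>c d. K = {c..d}"
    and density: "\<And>K. K \<in> D \<Longrightarrow> emeasure lebesgue (A \<inter> K) \<le> \<beta> * emeasure lebesgue K"
  shows "emeasure lebesgue (A \<inter> \<Union>D) \<le> \<beta> * emeasure lebesgue (\<Union>D)"
proof -
  define B where "B = (\<Union>K\<in>D. K - interior K)"
  have B: "B \<in> null_sets lebesgue"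
    unfolding B_def using negligible_Union_interval_boundaries[OF D(1,3)]
    by (simp add: negligible_iff_null_sets)
  have disjoint: "disjoint_family_on (\<lambda>K. A \<inter> interior K) D" "disjoint_family_on interior D"
    using D(2) unfolding disjoint_family_on_def pairwise_def by auto
  have open_sets: "interior K \<in> sets lebesgue" "A \<inter> interior K \<in> sets lebesgue" for K
    using A by auto
  have UN: "(\<Union>K\<in>D. A \<inter> interior K) \<in> sets lebesgue"
    using D(1) open_sets by (intro sets.countable_UN'') auto
  have "emeasure lebesgue (A \<inter> \<Union>D) \<le> emeasure lebesgue ((\<Union>K\<in>D. A \<inter> interior K) \<union> B)"
    by (intro emeasure_mono sets.Un UN null_setsD2[OF B]) (auto simp: B_def)
  also have "\<dots> = emeasure lebesgue (\<Union>K\<in>D. A \<inter> interior K)"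
    using UN B by (rule emeasure_Un_null_set)
  also have "\<dots> = (\<integral>\<^sup>+K. emeasure lebesgue (A \<inter> interior K) \<partial>count_space D)"
    by (rule emeasure_UN_countable[OF open_sets(2) D(1) disjoint(1)])
  also have "\<dots> \<le> (\<integral>\<^sup>+K. \<beta> * emeasure lebesgue (interior K) \<partial>count_space D)"
  proof (intro nn_integral_mono)
    fix K
    assume "K \<in> space (count_space D)"
    then have "K \<in> D"
      by simp
    then obtain c d where K: "K \<in> D" "K = {c..d}"
      using D(3) by blast
    have "emeasure lebesgue (A \<inter> interior K) \<le> emeasure lebesgue (A \<inter> K)"
      using A K(2) by (intro emeasure_mono) auto
    then show "emeasure lebesgue (A \<inter> interior K) \<le> \<beta> * emeasure lebesgue (interior K)"
      using density[OF K(1)] unfolding K(2) emeasure_interior_interval by simp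
  qed
  also have "\<dots> = \<beta> * (\<integral>\<^sup>+K. emeasure lebesgue (interior K) \<partial>count_space D)"
    by (rule nn_integral_cmult) simp
  also have "(\<integral>\<^sup>+K. emeasure lebesgue (interior K) \<partial>count_space D)
      = emeasure lebesgue (\<Union>K\<in>D. interior K)"
    by (rule emeasure_UN_countable[OF open_sets(1) D(1) disjoint(2), symmetric])
  also have "\<dots> \<le> emeasure lebesgue (\<Union>D)"
  proof (rule emeasure_mono)
    show "(\<Union>K\<in>D. interior K) \<subseteq> \<Union>D"
      using interior_subset by blast
    show "\<Union>D \<in> sets lebesgue"
      using D(1) by (intro sets.countable_Union) (auto dest: D(3))
  qed
  finally show ?thesis
    by (simp add: mult_left_mono)
qed

lemma emeasure_le_mult_add_if_dyadic_density_le: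
  fixes A :: "real set" and \<beta> :: ennreal and e :: real
  assumes A: "A \<in> sets lebesgue" and "0 < e"
    and density: "\<And>c d n. 0 \<le> c \<Longrightarrow> d \<le> 1 \<Longrightarrow> d - c = 1 / 2 ^ n \<Longrightarrow>
      emeasure lebesgue (A \<inter> {c..d}) \<le> \<beta> * emeasure lebesgue {c..d}"
  shows "emeasure lebesgue (A \<inter> {0..1}) \<le> \<beta> * (emeasure lebesgue (A \<inter> {0..1}) + ennreal e)"
proof -
  define S where "S = A \<inter> {0..1}"
  have S: "S \<in> lmeasurable"
    unfolding S_def using A by (rule lmeasurable_Int_interval)
  obtain D where D: "countable D"
      "\<And>K. K \<in> D \<Longrightarrow> K \<subseteq> cbox 0 1 \<and> K \<noteq> {} \<and> (\<exists>c d. K = cbox c d)"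
      "pairwise (\<lambda>K L. interior K \<inter> interior L = {}) D"
      "\<And>u v. cbox u v \<in> D \<Longrightarrow>
        \<exists>n. \<forall>i\<in>Basis. v \<bullet> i - u \<bullet> i = ((1::real) \<bullet> i - 0 \<bullet> i) / 2 ^ n"
    and cover: "S \<subseteq> \<Union>D" "\<Union>D \<in> lmeasurable"
      "measure lebesgue (\<Union>D) \<le> measure lebesgue S + e"
    by (rule measurable_outer_intervals_bounded[OF S _ \<open>0 < e\<close>, of 0 1]) (auto simp: S_def)
  have "emeasure lebesgue S \<le> emeasure lebesgue (A \<inter> \<Union>D)"
    using A cover(1,2) by (intro emeasure_mono) (auto simp: S_def)
  also have "\<dots> \<le> \<beta> * emeasure lebesgue (\<Union>D)"
  proof (rule emeasure_Int_Union_intervals_le[OF A D(1,3)])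
    show "\<exists>c d. K = {c..d}" if "K \<in> D" for K
      using D(2)[OF that] by auto
    show "emeasure lebesgue (A \<inter> K) \<le> \<beta> * emeasure lebesgue K" if K: "K \<in> D" for K
    proof -
      obtain c d where cd: "K = {c..d}" "K \<subseteq> {0..1}" "K \<noteq> {}"
        using D(2)[OF K] by auto
      obtain n where n: "d - c = 1 / 2 ^ n"
        using D(4)[of c d] K cd(1) by auto
      have "0 \<le> c" "d \<le> 1"
        using cd by auto
      then show ?thesis
        unfolding cd(1) using n by (rule density)
    qed
  qed
  also have "emeasure lebesgue (\<Union>D) \<le> emeasure lebesgue S + ennreal e"
    using S cover(2,3) \<open>0 < e\<close>
    by (simp add: emeasure_eq_measure2 ennreal_plus[symmetric] del: ennreal_plus)
  finally show ?thesis
    unfolding S_def by (simp add: mult_left_mono)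
qed

lemma nonneg_eq_0_if_le_contraction:
  fixes s \<beta> :: real
  assumes "0 \<le> s" "0 \<le> \<beta>" "\<beta> < 1" and bound: "\<And>e. 0 < e \<Longrightarrow> s \<le> \<beta> * (s + e)"
  shows "s = 0"
proof -
  have "s \<le> \<beta> * s"
  proof (rule field_le_epsilon)
    fix e :: real
    assume "0 < e"
    then have "s \<le> \<beta> * s + \<beta> * e"
      using bound by (simp add: distrib_left)
    moreover have "\<beta> * e \<le> e"
      using assms(2,3) \<open>0 < e\<close> by (simp add: mult_left_le_one_le)
    ultimately show "s \<le> \<beta> * s + e"
      by linarith
  qed
  then have "(1 - \<beta>) * s \<le> 0"
    by (simp add: algebra_simps)
  with assms(1,3) show ?thesis
    by (simp add: mult_le_0_iff)
qed

lemma null_sets_if_dyadic_density_le: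
  fixes A :: "real set"
  assumes A: "A \<in> sets lebesgue" and "\<beta> < 1"
    and density: "\<And>u v n. 0 \<le> u \<Longrightarrow> v \<le> 1 \<Longrightarrow> v - u = 1 / 2 ^ n \<Longrightarrow>
      measure lebesgue (A \<inter> {u..v}) \<le> \<beta> * (v - u)"
  shows "A \<inter> {0..1} \<in> null_sets lebesgue"
proof -
  define S where "S = A \<inter> {0..1}"
  have S: "S \<in> lmeasurable"
    unfolding S_def using A by (rule lmeasurable_Int_interval)
  have "measure lebesgue S \<le> \<beta>"
    using density[of 0 1 0] by (simp add: S_def)
  then have "0 \<le> \<beta>"
    using measure_nonneg[of lebesgue S] by linarith
  have ennreal_density: "emeasure lebesgue (A \<inter> {c..d}) \<le> ennreal \<beta> * emeasure lebesgue {c..d}"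
    if "0 \<le> c" "d \<le> 1" "d - c = 1 / 2 ^ n" for c d n
  proof -
    have "0 < d - c"
      unfolding that(3) by simp
    have "emeasure lebesgue (A \<inter> {c..d}) = ennreal (measure lebesgue (A \<inter> {c..d}))"
      using A by (simp add: emeasure_eq_measure2 lmeasurable_Int_interval)
    also have "\<dots> \<le> ennreal (\<beta> * (d - c))"
      using density that by (intro ennreal_leI) auto
    also have "\<dots> = ennreal \<beta> * emeasure lebesgue {c..d}"
      using \<open>0 \<le> \<beta>\<close> \<open>0 < d - c\<close> by (simp add: ennreal_mult)
    finally show ?thesis .
  qed
  have "measure lebesgue S \<le> \<beta> * (measure lebesgue S + e)" if "0 < e" for e
  proof -
    have "ennreal (measure lebesgue S) \<le> ennreal \<beta> * (ennreal (measure lebesgue S) + ennreal e)"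
      using emeasure_le_mult_add_if_dyadic_density_le[OF A _ ennreal_density, of e] S \<open>0 < e\<close>
      by (simp add: S_def emeasure_eq_measure2)
    also have "\<dots> = ennreal (\<beta> * (measure lebesgue S + e))"
      using \<open>0 \<le> \<beta>\<close> \<open>0 < e\<close> by (simp add: ennreal_mult ennreal_plus)
    finally show ?thesis
      using \<open>0 \<le> \<beta>\<close> \<open>0 < e\<close> by (simp add: ennreal_le_iff)
  qed
  then have "measure lebesgue S = 0"
    using \<open>0 \<le> \<beta>\<close> \<open>\<beta> < 1\<close> by (intro nonneg_eq_0_if_le_contraction) auto
  with S show ?thesis
    unfolding S_def by (rule null_sets_if_fmeasurable_measure_eq_0)
qed

lemma measure_Int_dyadic_interval_le:
  fixes A :: "real set"
  assumes A: "A \<in> sets lebesgue" "integer_periodic A"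
    and dilation: "\<And>\<alpha> q. 0 < q \<Longrightarrow> \<alpha> \<in> A \<Longrightarrow> real q * \<alpha> \<in> A"
    and uv: "v - u = 1 / 2 ^ n"
  shows "measure lebesgue (A \<inter> {u..v}) \<le> (1 - measure lebesgue ((UNIV - A) \<inter> {0..1}) / 2) * (v - u)"
proof -
  define C where "C = UNIV - A"
  define q :: nat where "q = 2 ^ Suc n"
  have C: "C \<in> sets lebesgue" "integer_periodic C"
    using A unfolding C_def integer_periodic_def by auto
  have "0 < q" "u + 2 / real q = v" "0 < v - u"
    using uv by (simp_all add: q_def)
  have "measure lebesgue (C \<inter> {0..1}) \<le> real q * measure lebesgue (C \<inter> {u..v})"
    unfolding \<open>u + 2 / real q = v\<close>[symmetric]
    using C dilation \<open>0 < q\<close> unfolding C_def by (intro measure_unit_interval_le_scaled) auto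
  then have "measure lebesgue (C \<inter> {0..1}) / 2 * (v - u) \<le> measure lebesgue (C \<inter> {u..v})"
    using \<open>0 < q\<close> uv by (simp add: q_def pos_divide_le_eq mult.commute)
  moreover have "measure lebesgue (C \<inter> {u..v}) = (v - u) - measure lebesgue (A \<inter> {u..v})"
  proof -
    have "C \<inter> {u..v} = {u..v} - A \<inter> {u..v}"
      unfolding C_def by auto
    also have "measure lebesgue \<dots> = measure lebesgue {u..v} - measure lebesgue (A \<inter> {u..v})"
      using A(1) lmeasurable_cbox[of u v] by (intro measurable_measure_Diff) auto
    finally show ?thesis
      using \<open>0 < v - u\<close> by simp
  qed
  ultimately show ?thesis
    unfolding C_def by (simp add: algebra_simps)
qed

lemma integer_periodic_null_or_conull:
  fixes A :: "real set"
  assumes A: "A \<in> sets lebesgue" "integer_periodic A"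
    and dilation: "\<And>\<alpha> q. 0 < q \<Longrightarrow> \<alpha> \<in> A \<Longrightarrow> real q * \<alpha> \<in> A"
  shows "A \<in> null_sets lebesgue \<or> UNIV - A \<in> null_sets lebesgue"
proof -
  define c where "c = measure lebesgue ((UNIV - A) \<inter> {0..1})"
  have C: "UNIV - A \<in> sets lebesgue" "integer_periodic (UNIV - A)"
    using A unfolding integer_periodic_def by auto
  have "0 \<le> c"
    by (simp add: c_def)
  then consider "c = 0" | "0 < c"
    by linarith
  then show ?thesis
  proof cases
    case 1
    then have "(UNIV - A) \<inter> {0..1} \<in> null_sets lebesgue"
      unfolding c_def using lmeasurable_Int_interval[OF C(1)]
      by (rule null_sets_if_fmeasurable_measure_eq_0[rotated])
    then show ?thesis
      using null_sets_if_integer_periodic[OF C(2)] by blast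
  next
    case 2
    have "A \<inter> {0..1} \<in> null_sets lebesgue"
      using A(1) \<open>0 < c\<close> measure_Int_dyadic_interval_le[OF A dilation]
      by (intro null_sets_if_dyadic_density_le[where \<beta> = "1 - c / 2"]) (auto simp: c_def)
    then show ?thesis
      using null_sets_if_integer_periodic[OF A(2)] by blast
  qed
qed

theorem theorem8:
  fixes x :: "nat \<Rightarrow> int"
  defines "A \<equiv> {\<alpha>::real. small_gap x \<alpha>}"
  shows "A \<in> null_sets lebesgue \<or> (UNIV - A) \<in> null_sets lebesgue"
proof (rule integer_periodic_null_or_conull)
  show "A \<in> sets lebesgue"
    using sets_small_gap[of x] unfolding A_def by simp
  show "integer_periodic A"
    unfolding A_def integer_periodic_def by (simp add: small_gap_add_of_int)
  show "real q * \<alpha> \<in> A" if "\<alpha> \<in> A" for \<alpha> and q :: nat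
    using that unfolding A_def by (simp add: small_gap_mult_of_nat)
qed

end
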